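(* Let $\gamma$ be a Hamel basis of $\mathbb{R}$ over $\mathbb{Q}$ with $1\in\gamma$, let $A_\gamma:\mathbb{R}\to\mathbb{R}$ be the unique $\mathbb{Q}$-linear map with $A_\gamma(1)=1$ and $A_\gamma(b)=0$ for all $b\in\gamma\setminus\{1\}$, and let $n\ge1$ be an integer. Then $f_n(x)=A_\gamma(x)^n$ is a discontinuous $n$-monomial function whose graph $\{(x,f_n(x)):x\in\mathbb{R}\}$ is totally disconnected.
   Context: For $h\in\mathbb{R}$, $\Delta_h f(x)=f(x+h)-f(x)$ and $\Delta_h^{n}=\Delta_h\circ\Delta_h^{n-1}$. A function $f:\mathbb{R}\to\mathbb{R}$ is an $n$-monomial function if $\frac{1}{n!}\Delta_h^n f(x)=f(h)$ for all $x,h\in\mathbb{R}$. A subset of $\mathbb{R}^2$ is totally disconnected if all its connected components are singletons. *)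

theory Defs
  imports "HOL-Analysis.Analysis"
begin

definition rat_span :: "real set \<Rightarrow> real set" where
  "rat_span S = {x. \<exists>T c. finite T \<and> T \<subseteq> S \<and> (\<forall>t\<in>T. c t \<in> \<rat>) \<and> x = (\<Sum>t\<in>T. c t * t)}"

definition rat_independent :: "real set \<Rightarrow> bool" where
  "rat_independent S \<longleftrightarrow> (\<forall>T c. finite T \<and> T \<subseteq> S \<and> (\<forall>t\<in>T. c t \<in> \<rat>) \<and> (\<Sum>t\<in>T. c t * t) = 0
      \<longrightarrow> (\<forall>t\<in>T. c t = 0))"

definition hamel_basis :: "real set \<Rightarrow> bool" where
  "hamel_basis B \<longleftrightarrow> rat_independent B \<and> rat_span B = UNIV"

definition rat_linear :: "(real \<Rightarrow> real) \<Rightarrow> bool" where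
  "rat_linear A \<longleftrightarrow> (\<forall>x y. A (x + y) = A x + A y) \<and> (\<forall>q x. q \<in> \<rat> \<longrightarrow> A (q * x) = q * A x)"

definition diff_op :: "real \<Rightarrow> (real \<Rightarrow> real) \<Rightarrow> (real \<Rightarrow> real)" where
  "diff_op h f = (\<lambda>x. f (x + h) - f x)"

definition monomial_fun :: "nat \<Rightarrow> (real \<Rightarrow> real) \<Rightarrow> bool" where
  "monomial_fun n f \<longleftrightarrow> (\<forall>x h. (1 / fact n) * ((diff_op h ^^ n) f) x = f h)"

definition totally_disconnected :: "'a::topological_space set \<Rightarrow> bool" where
  "totally_disconnected S \<longleftrightarrow> (\<forall>x\<in>S. connected_component_set S x = {x})"

end

theory Submission
  imports Defs
begin

text \<open>Since the iterated difference operator commutes with composition by an additive map,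
  \<open>A\<^sub>\<gamma>(x)\<^sup>n\<close> inherits the monomial equation from \<open>t\<^sup>n\<close>. The map \<open>A\<^sub>\<gamma>\<close> is the identity on \<open>\<rat>\<close> but
  vanishes at the irrational basis elements, so \<open>f\<^sub>n\<close> cannot be continuous. Finally, \<open>f\<^sub>n\<close> takes only
  rational values, so every connected subset of its graph has constant second coordinate; its
  projection to the first coordinate is an interval on which \<open>f\<^sub>n(q) = q\<^sup>n\<close> at rational points,
  which forces the interval to be a point.\<close>

lemma rat_span_subset_Rats:
  assumes "S \<subseteq> \<rat>"
  shows "rat_span S \<subseteq> \<rat>"
  using assms by (force simp: rat_span_def)

lemma hamel_basis_not_subset_Rats:
  assumes "hamel_basis B"
  shows "\<not> B \<subseteq> \<rat>"
proof
  assume "B \<subseteq> \<rat>"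
  then have "(UNIV :: real set) \<subseteq> \<rat>"
    using assms rat_span_subset_Rats by (auto simp: hamel_basis_def)
  then show False
    using countable_rat countable_subset uncountable_UNIV_real by blast
qed

lemma rat_linear_sum:
  assumes "rat_linear A" "finite T" "\<forall>t\<in>T. c t \<in> \<rat>"
  shows "A (\<Sum>t\<in>T. c t * t) = (\<Sum>t\<in>T. c t * A t)"
  using assms(2,3)
proof (induction T rule: finite_induct)
  case empty
  have "A 0 = A 0 + A 0"
    using assms(1) unfolding rat_linear_def by (metis add_0)
  then show ?case by simp
next
  case (insert x F)
  then show ?case
    using assms(1) unfolding rat_linear_def by simp
qed

lemma rat_linear_Rats:
  assumes "rat_linear A" "q \<in> \<rat>"
  shows "A q = q * A 1"
  using assms unfolding rat_linear_def by (metis mult.right_neutral)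

lemma rat_linear_range_Rats:
  assumes "rat_linear A" "hamel_basis B" "A ` B \<subseteq> \<rat>"
  shows "A x \<in> \<rat>"
proof -
  have "x \<in> rat_span B"
    using assms(2) by (auto simp: hamel_basis_def)
  then obtain T c where T: "finite T" "T \<subseteq> B" "\<forall>t\<in>T. c t \<in> \<rat>" "x = (\<Sum>t\<in>T. c t * t)"
    unfolding rat_span_def by blast
  have "A x = (\<Sum>t\<in>T. c t * A t)"
    using rat_linear_sum[OF assms(1) T(1,3)] T(4) by simp
  also have "\<dots> \<in> \<rat>"
    using T(2,3) assms(3) by (auto intro!: Rats_sum Rats_mult)
  finally show ?thesis .
qed

lemma diff_op_funpow_sum:
  assumes "finite S"
  shows "(diff_op c ^^ k) (\<lambda>t. \<Sum>j\<in>S. w j * g j t) = (\<lambda>x. \<Sum>j\<in>S. w j * (diff_op c ^^ k) (g j) x)"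
proof (induction k)
  case 0 then show ?case by simp
next
  case (Suc k)
  have "(diff_op c ^^ Suc k) (\<lambda>t. \<Sum>j\<in>S. w j * g j t) = diff_op c ((diff_op c ^^ k) (\<lambda>t. \<Sum>j\<in>S. w j * g j t))"
    by simp
  also have "\<dots> = diff_op c (\<lambda>x. \<Sum>j\<in>S. w j * (diff_op c ^^ k) (g j) x)"
    by (simp only: Suc)
  also have "\<dots> = (\<lambda>x. \<Sum>j\<in>S. w j * (diff_op c ^^ Suc k) (g j) x)"
    by (simp add: diff_op_def sum_subtractf[symmetric] right_diff_distrib)
  finally show ?case .
qed

lemma diff_op_funpow_power:
  "m \<le> k \<Longrightarrow> (diff_op c ^^ k) (\<lambda>t. t ^ m) x = (if m = k then fact k * c ^ k else 0)"
proof (induction k arbitrary: m x)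
  case 0 then show ?case by simp
next
  case (Suc k)
  have binomial_diff: "diff_op c (\<lambda>t::real. t ^ m) = (\<lambda>t. \<Sum>j<m. (of_nat (m choose j) * c ^ (m - j)) * t ^ j)"
  proof
    fix t :: real
    have "(t + c) ^ m = (\<Sum>j\<le>m. of_nat (m choose j) * t ^ j * c ^ (m - j))"
      by (rule binomial_ring)
    also have "\<dots> = (\<Sum>j<m. of_nat (m choose j) * t ^ j * c ^ (m - j)) + t ^ m"
      by (simp add: lessThan_Suc_atMost[symmetric])
    finally show "diff_op c (\<lambda>t. t ^ m) t = (\<Sum>j<m. (of_nat (m choose j) * c ^ (m - j)) * t ^ j)"
      by (simp add: diff_op_def algebra_simps)
  qed
  have "(diff_op c ^^ Suc k) (\<lambda>t. t ^ m) x = (diff_op c ^^ k) (diff_op c (\<lambda>t. t ^ m)) x"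
    by (simp add: funpow_Suc_right del: funpow.simps)
  also have "\<dots> = (\<Sum>j<m. (of_nat (m choose j) * c ^ (m - j)) * (diff_op c ^^ k) (\<lambda>t. t ^ j) x)"
    unfolding binomial_diff by (simp add: diff_op_funpow_sum)
  also have "\<dots> = (\<Sum>j<m. (if j = k then (of_nat (m choose j) * c ^ (m - j)) * (fact k * c ^ k) else 0))"
    using Suc.prems by (intro sum.cong refl) (auto simp: Suc.IH)
  also have "\<dots> = (if k < m then (of_nat (m choose k) * c ^ (m - k)) * (fact k * c ^ k) else 0)"
    by (simp add: sum.delta')
  also have "\<dots> = (if m = Suc k then fact (Suc k) * c ^ Suc k else 0)"
    using Suc.prems by (auto simp: algebra_simps)
  finally show ?case .
qed

lemma diff_op_funpow_comp_additive:
  assumes add: "\<And>x y. A (x + y) = A x + A y"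
  shows "(diff_op h ^^ k) (\<lambda>x. F (A x)) = (\<lambda>x. (diff_op (A h) ^^ k) F (A x))"
proof (induction k)
  case 0 then show ?case by simp
next
  case (Suc k)
  have "(diff_op h ^^ Suc k) (\<lambda>x. F (A x)) = diff_op h ((diff_op h ^^ k) (\<lambda>x. F (A x)))"
    by simp
  also have "\<dots> = diff_op h (\<lambda>x. (diff_op (A h) ^^ k) F (A x))"
    by (simp only: Suc)
  also have "\<dots> = (\<lambda>x. (diff_op (A h) ^^ Suc k) F (A x))"
    by (simp add: diff_op_def add)
  finally show ?case .
qed

lemma monomial_fun_power_additive:
  assumes "\<And>x y. A (x + y) = A x + A y"
  shows "monomial_fun n (\<lambda>x. A x ^ n)"
  unfolding monomial_fun_def
proof (intro allI)
  fix x h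
  have "(diff_op h ^^ n) (\<lambda>x. A x ^ n) x = (diff_op (A h) ^^ n) (\<lambda>t. t ^ n) (A x)"
    by (simp add: diff_op_funpow_comp_additive[where F="\<lambda>t. t ^ n", OF assms])
  also have "\<dots> = fact n * A h ^ n"
    by (simp add: diff_op_funpow_power)
  finally show "1 / fact n * (diff_op h ^^ n) (\<lambda>x. A x ^ n) x = A h ^ n"
    by simp
qed

lemma continuous_on_eq_if_eq_on_Rats:
  fixes f g :: "real \<Rightarrow> real"
  assumes "continuous_on UNIV f" "continuous_on UNIV g" "\<And>q. q \<in> \<rat> \<Longrightarrow> f q = g q"
  shows "f x = g x"
proof -
  have "continuous_on (closure \<rat>) (\<lambda>x. f x - g x)"
    unfolding Rats_closure_real using assms(1,2) by (intro continuous_intros)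
  then have "(\<lambda>x. f x - g x) x = 0"
    by (rule continuous_constant_on_closure) (simp_all add: assms(3) Rats_closure_real)
  then show ?thesis by simp
qed

lemma power_not_constant_on_Rats:
  fixes a b :: real
  assumes "n \<ge> 1" "a < b"
  shows "\<exists>x y. x \<in> \<rat> \<and> y \<in> \<rat> \<and> a < x \<and> x < b \<and> a < y \<and> y < b \<and> x ^ n \<noteq> y ^ n"
proof -
  obtain q1 where q1: "q1 \<in> \<rat>" "a < q1" "q1 < b"
    using Rats_dense_in_real[OF assms(2)] by blast
  obtain q2 where q2: "q2 \<in> \<rat>" "q1 < q2" "q2 < b"
    using Rats_dense_in_real[OF q1(3)] by blast
  obtain q3 where q3: "q3 \<in> \<rat>" "q2 < q3" "q3 < b"
    using Rats_dense_in_real[OF q2(3)] by blast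
  \<comment> \<open>\<open>x \<mapsto> x\<^sup>n\<close> is injective up to sign, so it cannot agree at three distinct points\<close>
  have "q1 ^ n \<noteq> q2 ^ n \<or> q2 ^ n \<noteq> q3 ^ n"
  proof (rule ccontr)
    assume "\<not> ?thesis"
    then have "\<bar>q1\<bar> ^ n = \<bar>q2\<bar> ^ n" "\<bar>q2\<bar> ^ n = \<bar>q3\<bar> ^ n"
      by (simp_all add: power_abs[symmetric])
    then have "\<bar>q1\<bar> = \<bar>q2\<bar>" "\<bar>q2\<bar> = \<bar>q3\<bar>"
      using assms(1) by (simp_all add: power_eq_iff_eq_base)
    then show False
      using q2(2) q3(2) by (auto simp: abs_if split: if_splits)
  qed
  then show ?thesis
    using q1 q2 q3 by (meson order.strict_trans)
qed

lemma totally_disconnected_graph: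
  fixes f :: "real \<Rightarrow> real"
  assumes "countable (range f)"
    and "\<And>a b. a < b \<Longrightarrow> \<exists>x y. a < x \<and> x < b \<and> a < y \<and> y < b \<and> f x \<noteq> f y"
  shows "totally_disconnected {(x, f x) | x. True}"
  unfolding totally_disconnected_def
proof
  define G where "G = {(x, f x) | x. True}"
  fix p assume "p \<in> {(x, f x) | x. True}"
  then have "p \<in> G" by (simp add: G_def)
  define C where "C = connected_component_set G p"
  have "connected C" "C \<subseteq> G" "p \<in> C"
    using \<open>p \<in> G\<close> by (simp_all add: C_def connected_component_subset)
  have snd_eq: "snd z = snd p" if "z \<in> C" for z
  proof (rule ccontr)
    assume "snd z \<noteq> snd p"
    moreover have "connected (snd ` C)"
      using \<open>connected C\<close> by (intro connected_continuous_image continuous_intros)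
    ultimately have "uncountable (snd ` C)"
      using connected_uncountable \<open>p \<in> C\<close> that by blast
    moreover have "snd ` C \<subseteq> range f"
      using \<open>C \<subseteq> G\<close> by (auto simp: G_def)
    ultimately show False
      using assms(1) countable_subset by blast
  qed
  have graph_fst_inj: "z = w" if "z \<in> G" "w \<in> G" "fst z = fst w" for z w
    using that by (auto simp: G_def)
  have "z = p" if "z \<in> C" for z
  proof (rule ccontr)
    assume "z \<noteq> p"
    then have "fst z \<noteq> fst p"
      using graph_fst_inj \<open>C \<subseteq> G\<close> \<open>p \<in> C\<close> that by blast
    define a b where "a = min (fst z) (fst p)" and "b = max (fst z) (fst p)"
    have "a < b" "a \<in> fst ` C" "b \<in> fst ` C"
      using \<open>fst z \<noteq> fst p\<close> \<open>p \<in> C\<close> that by (auto simp: a_def b_def min_def max_def)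
    have "connected (fst ` C)"
      using \<open>connected C\<close> by (intro connected_continuous_image continuous_intros)
    then have "{a..b} \<subseteq> fst ` C"
      using \<open>a \<in> fst ` C\<close> \<open>b \<in> fst ` C\<close> by (rule connected_contains_Icc)
    have "f x = snd p" if "x \<in> {a..b}" for x
    proof -
      obtain w where "w \<in> C" "fst w = x"
        using \<open>{a..b} \<subseteq> fst ` C\<close> \<open>x \<in> {a..b}\<close> by force
      moreover have "w = (x, f x)"
        using \<open>C \<subseteq> G\<close> calculation by (auto simp: G_def)
      ultimately show ?thesis
        using snd_eq by (metis snd_conv)
    qed
    then show False
      using assms(2)[OF \<open>a < b\<close>] by fastforce
  qed
  then show "connected_component_set {(x, f x) | x. True} p = {p}"
    using \<open>p \<in> C\<close> by (auto simp: C_def G_def)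
qed

theorem mainTheorem4:
  fixes \<gamma> :: "real set" and A :: "real \<Rightarrow> real" and n :: nat
  assumes "hamel_basis \<gamma>" and "1 \<in> \<gamma>"
    and "rat_linear A" and "A 1 = 1" and "\<forall>b\<in>\<gamma> - {1}. A b = 0"
    and "n \<ge> 1"
  shows "\<not> continuous_on UNIV (\<lambda>x. A x ^ n)
    \<and> monomial_fun n (\<lambda>x. A x ^ n)
    \<and> totally_disconnected {(x, A x ^ n) | x. True}"
proof -
  have A_Rats: "A q = q" if "q \<in> \<rat>" for q
    using rat_linear_Rats[OF assms(3) that] assms(4) by simp
  have A_range: "A x \<in> \<rat>" for x
    using assms(4,5) by (intro rat_linear_range_Rats[OF assms(3,1)]) force
  obtain b where "b \<in> \<gamma>" "b \<notin> \<rat>"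
    using hamel_basis_not_subset_Rats[OF assms(1)] by blast
  then have "A b = 0" "b \<noteq> 0"
    using assms(5) by auto
  have "\<not> continuous_on UNIV (\<lambda>x. A x ^ n)"
  proof
    assume "continuous_on UNIV (\<lambda>x. A x ^ n)"
    moreover have "continuous_on UNIV (\<lambda>x::real. x ^ n)"
      by (intro continuous_intros)
    ultimately have "A b ^ n = b ^ n"
      by (rule continuous_on_eq_if_eq_on_Rats) (simp add: A_Rats)
    then show False
      using \<open>A b = 0\<close> \<open>b \<noteq> 0\<close> assms(6) by (simp add: power_0_left)
  qed
  moreover have "monomial_fun n (\<lambda>x. A x ^ n)"
    using assms(3) by (intro monomial_fun_power_additive) (simp add: rat_linear_def)
  moreover have "totally_disconnected {(x, A x ^ n) | x. True}"
  proof (rule totally_disconnected_graph)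
    have "range (\<lambda>x. A x ^ n) \<subseteq> (\<lambda>q. q ^ n) ` \<rat>"
      using A_range by blast
    then show "countable (range (\<lambda>x. A x ^ n))"
      using countable_image[OF countable_rat] countable_subset by blast
  next
    fix a b :: real
    assume "a < b"
    then obtain x y where "x \<in> \<rat>" "y \<in> \<rat>" "a < x" "x < b" "a < y" "y < b" "x ^ n \<noteq> y ^ n"
      using power_not_constant_on_Rats[OF assms(6)] by blast
    then show "\<exists>x y. a < x \<and> x < b \<and> a < y \<and> y < b \<and> A x ^ n \<noteq> A y ^ n"
      using A_Rats by (intro exI[of _ x] exI[of _ y]) simp
  qed
  ultimately show ?thesis
    by blast
qed

end
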